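(* Let $X$ be a Polish space, let $\Lambda$ be a Borel subset of $X$, and let $T_1,T_2$ be continuous self-maps of $X$. Assume that for every compact set $K\subseteq X$ with $K\cap\Lambda=\emptyset$ there exists an infinite set $I\subseteq\mathbb N$ such that no point $x\in X$ belongs to $T_1^{-n}(K)\cap T_2^{-n}(K)$ for infinitely many $n\in I$. Then, whenever $m_1$ is a $T_1$-invariant Borel probability measure on $X$ and $m_2$ is a $T_2$-invariant Borel probability measure on $X$ with $m_1(\Lambda)=0=m_2(\Lambda)$, the measures $m_1$ and $m_2$ are mutually singular.
   Context: A Borel probability measure $m$ is $T$-invariant if $m(T^{-1}(A))=m(A)$ for every Borel set $A$. *)

theory Defs
  imports "HOL-Probability.Probability"
begin

definition borel_prob :: "'a::topological_space measure \<Rightarrow> bool" where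
  "borel_prob m \<longleftrightarrow> prob_space m \<and> sets m = sets borel"

definition invariant_measure :: "('a::topological_space \<Rightarrow> 'a) \<Rightarrow> 'a measure \<Rightarrow> bool" where
  "invariant_measure T m \<longleftrightarrow> (\<forall>A \<in> sets borel. emeasure m (T -` A) = emeasure m A)"

definition mutually_singular :: "'a::topological_space measure \<Rightarrow> 'a measure \<Rightarrow> bool" where
  "mutually_singular m1 m2 \<longleftrightarrow>
     (\<exists>A \<in> sets borel. emeasure m1 A = 0 \<and> emeasure m2 (UNIV - A) = 0)"

end

(*
  By inner regularity of Borel probability measures on a Polish space, for each e > 0 there is a
  compact K disjoint from \<Lambda> whose complement has m1- and m2-measure below e.  Since no point
  visits K simultaneously under T1^n and T2^n for infinitely many n in I, continuity from above
  makes the set of points doing so at some n in I with n \<ge> N m2-small for large N.  For such an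
  n \<ge> N in I, the set E = T1^-n (X - K) has m1 E = m1 (X - K) < e by T1-invariance, while its
  complement T1^-n K lies in that m2-small set together with T2^-n (X - K), which has m2-measure
  m2 (X - K) < e by T2-invariance.  Taking e = 2^-k and applying Borel-Cantelli to both measures,
  lim sup E_k is m1-null and has m2-null complement.
*)
theory Submission
  imports Defs
begin

lemma borel_prob_space_eq:
  assumes "borel_prob m"
  shows "space m = UNIV"
  using assms unfolding borel_prob_def by (metis sets_eq_imp_space_eq space_borel)

lemma preimage_funpow_borel:
  fixes T :: "'a::topological_space \<Rightarrow> 'a"
  assumes "T \<in> borel_measurable borel" "A \<in> sets borel"
  shows "(T ^^ n) -` A \<in> sets borel"
  using measurable_sets[OF measurable_compose_n[OF assms(1)] assms(2)] by simp

lemma invariant_measure_funpow: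
  assumes "invariant_measure T m" "T \<in> borel_measurable borel"
  shows "invariant_measure (T ^^ n) m"
  unfolding invariant_measure_def
proof (induction n)
  case (Suc n)
  have "T -` ((T ^^ n) -` A) = (T ^^ Suc n) -` A" for A
    by (simp only: funpow_Suc_right vimage_comp)
  with Suc assms show ?case
    unfolding invariant_measure_def by (metis preimage_funpow_borel)
qed simp

lemma borel_prob_measure_compl_antimono:
  assumes "borel_prob m" "closed A" "A \<subseteq> B"
  shows "measure m (UNIV - B) \<le> measure m (UNIV - A)"
proof -
  interpret prob_space m using assms(1) by (simp add: borel_prob_def)
  show ?thesis
    using assms by (intro finite_measure_mono) (auto simp: borel_prob_def borel_closed)
qed

lemma (in finite_measure) tendsto_measure_tail_union_0:
  assumes "range F \<subseteq> sets M" and "\<And>x. finite {n. x \<in> F n}"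
  shows "(\<lambda>N. measure M (\<Union>n\<in>{N..}. F n)) \<longlonglongrightarrow> 0"
proof -
  have tails_empty: "(\<Inter>N. \<Union>n\<in>{N..}. F n) = {}"
  proof safe
    fix x assume x: "x \<in> (\<Inter>N. \<Union>n\<in>{N..}. F n)"
    obtain B where "\<forall>n\<in>{n. x \<in> F n}. n \<le> B"
      using assms(2) finite_nat_set_iff_bounded_le by blast
    with x show "x \<in> {}"
      by (metis (mono_tags) INT_E UN_E UNIV_I atLeast_iff mem_Collect_eq not_less_eq_eq)
  qed
  have "(\<lambda>N. measure M (\<Union>n\<in>{N..}. F n)) \<longlonglongrightarrow> measure M (\<Inter>N. \<Union>n\<in>{N..}. F n)"
    using assms(1) by (intro finite_Lim_measure_decseq) (fastforce simp: decseq_def)+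
  then show ?thesis by (simp add: tails_empty)
qed

lemma mutually_singularI_summable:
  assumes "borel_prob m1" "borel_prob m2" and E: "\<And>n. E n \<in> sets borel"
    and "summable (\<lambda>n. measure m1 (E n))" and "summable (\<lambda>n. measure m2 (UNIV - E n))"
  shows "mutually_singular m1 m2"
proof -
  interpret p1: prob_space m1 using assms(1) by (simp add: borel_prob_def)
  interpret p2: prob_space m2 using assms(2) by (simp add: borel_prob_def)
  have s1: "sets m1 = sets borel" and s2: "sets m2 = sets borel"
    using assms(1,2) by (simp_all add: borel_prob_def)
  have "limsup E \<in> null_sets m1"
    using assms(4) E by (intro borel_cantelli_limsup1) (auto simp: s1 p1.emeasure_eq_measure)
  moreover have "limsup (\<lambda>n. UNIV - E n) \<in> null_sets m2"
    using assms(5) E by (intro borel_cantelli_limsup1) (auto simp: s2 p2.emeasure_eq_measure)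
  moreover have "UNIV - limsup E \<subseteq> limsup (\<lambda>n. UNIV - E n)"
  proof
    fix x assume "x \<in> UNIV - limsup E"
    then obtain N where "\<forall>n\<ge>N. x \<notin> E n" by (auto simp: limsup_INF_SUP)
    then show "x \<in> limsup (\<lambda>n. UNIV - E n)"
      by (simp add: limsup_INF_SUP) (metis atLeast_iff max.cobounded1 max.cobounded2)
  qed
  moreover have "limsup E \<in> sets borel"
    using E by (simp add: limsup_INF_SUP)
  ultimately show ?thesis
    unfolding mutually_singular_def using s2
    by (metis null_setsD1 null_sets_subset sets.compl_sets space_borel)
qed

lemma mutually_singularI_approx:
  assumes "borel_prob m1" "borel_prob m2"
    and approx: "\<And>e. e > 0 \<Longrightarrow> \<exists>E\<in>sets borel. measure m1 E < e \<and> measure m2 (UNIV - E) < e"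
  shows "mutually_singular m1 m2"
proof -
  obtain E where E: "\<And>k. E k \<in> sets borel" "\<And>k. measure m1 (E k) < (1/2)^k"
      "\<And>k. measure m2 (UNIV - E k) < (1/2)^k"
    using approx[of "(1/2)^_"] by (metis zero_less_divide_1_iff zero_less_numeral zero_less_power)
  have geometric: "summable (\<lambda>k. (1/2::real)^k)" by simp
  have "summable (\<lambda>k. measure m1 (E k))" "summable (\<lambda>k. measure m2 (UNIV - E k))"
    using less_imp_le[OF E(2)] less_imp_le[OF E(3)]
    by (auto intro!: summable_comparison_test'[OF geometric])
  with assms(1,2) E(1) show ?thesis by (rule mutually_singularI_summable)
qed

lemma exists_compact_avoiding_null_set:
  fixes m :: "'a::polish_space measure"
  assumes "borel_prob m" "\<Lambda> \<in> sets borel" "emeasure m \<Lambda> = 0" "e > 0"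
  shows "\<exists>K. compact K \<and> K \<inter> \<Lambda> = {} \<and> measure m (UNIV - K) < e"
proof -
  interpret prob_space m using assms(1) by (simp add: borel_prob_def)
  have sets: "sets m = sets borel" using assms(1) by (simp add: borel_prob_def)
  have "emeasure m (UNIV - \<Lambda>) = (SUP K \<in> {K. K \<subseteq> UNIV - \<Lambda> \<and> compact K}. emeasure m K)"
    using assms(2) by (intro inner_regular[OF sets]) auto
  moreover have "emeasure m (UNIV - \<Lambda>) = 1"
    using assms(2,3) prob_compl[of \<Lambda>] borel_prob_space_eq[OF assms(1)]
    by (simp add: sets emeasure_eq_measure)
  moreover have "ennreal (1 - e) < 1"
    using assms(4) ennreal_lessI[of 1 "1 - e"] by simp
  ultimately have "ennreal (1 - e) < (SUP K \<in> {K. K \<subseteq> UNIV - \<Lambda> \<and> compact K}. emeasure m K)"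
    by simp
  then obtain K where K: "compact K" "K \<subseteq> UNIV - \<Lambda>" "ennreal (1 - e) < emeasure m K"
    by (auto simp: less_SUP_iff)
  have K_large: "1 - e < measure m K"
    using K(3) by (cases "0 \<le> 1 - e")
      (auto simp: emeasure_eq_measure ennreal_less_iff intro: less_le_trans[OF _ measure_nonneg])
  have "measure m (UNIV - K) = 1 - measure m K"
    using prob_compl[of K] borel_prob_space_eq[OF assms(1)] K(1)
    by (simp add: sets borel_compact)
  with K K_large show ?thesis by auto
qed

lemma exists_preimage_separating:
  assumes "borel_prob m1" "borel_prob m2"
    and T1: "T1 \<in> borel_measurable borel" and T2: "T2 \<in> borel_measurable borel"
    and "invariant_measure T1 m1" "invariant_measure T2 m2"
    and K: "K \<in> sets borel" and "infinite I"
    and finite_visits: "\<And>x. finite {n \<in> I. x \<in> (T1 ^^ n) -` K \<inter> (T2 ^^ n) -` K}"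
    and "e > 0"
  shows "\<exists>E \<in> sets borel. measure m1 E = measure m1 (UNIV - K) \<and>
           measure m2 (UNIV - E) < measure m2 (UNIV - K) + e"
proof -
  interpret p2: prob_space m2 using assms(2) by (simp add: borel_prob_def)
  have s2: "sets m2 = sets borel" using assms(2) by (simp add: borel_prob_def)
  have K_compl: "UNIV - K \<in> sets borel" using K by auto
  define F where "F n = (if n \<in> I then (T1 ^^ n) -` K \<inter> (T2 ^^ n) -` K else {})" for n
  have F: "range F \<subseteq> sets m2"
    using preimage_funpow_borel[OF T1 K] preimage_funpow_borel[OF T2 K] by (auto simp: F_def s2)
  have "{n. x \<in> F n} = {n \<in> I. x \<in> (T1 ^^ n) -` K \<inter> (T2 ^^ n) -` K}" for x
    by (auto simp: F_def)
  then have "(\<lambda>N. measure m2 (\<Union>n\<in>{N..}. F n)) \<longlonglongrightarrow> 0"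
    using F finite_visits by (intro p2.tendsto_measure_tail_union_0) auto
  then have "eventually (\<lambda>N. measure m2 (\<Union>n\<in>{N..}. F n) < e) sequentially"
    using \<open>e > 0\<close> by (rule order_tendstoD(2))
  then obtain N where N: "measure m2 (\<Union>n\<in>{N..}. F n) < e"
    by (auto simp: eventually_sequentially)
  obtain n where n: "n \<in> I" "N \<le> n"
    using \<open>infinite I\<close> by (metis infinite_nat_iff_unbounded_le)
  define E where "E = (T1 ^^ n) -` (UNIV - K)"
  have "measure m1 E = measure m1 (UNIV - K)"
    using invariant_measure_funpow[OF assms(5) T1] K_compl
    by (simp add: E_def measure_def invariant_measure_def)
  moreover have "measure m2 (UNIV - E) < measure m2 (UNIV - K) + e"
  proof -
    have "UNIV - E \<subseteq> (\<Union>n\<in>{N..}. F n) \<union> (T2 ^^ n) -` (UNIV - K)"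
      using n by (auto simp: E_def F_def)
    then have "measure m2 (UNIV - E)
        \<le> measure m2 (\<Union>n\<in>{N..}. F n) + measure m2 ((T2 ^^ n) -` (UNIV - K))"
      using F preimage_funpow_borel[OF T2 K_compl]
      by (intro order_trans[OF p2.finite_measure_mono measure_Un_le]) (auto simp: s2)
    also have "measure m2 ((T2 ^^ n) -` (UNIV - K)) = measure m2 (UNIV - K)"
      using invariant_measure_funpow[OF assms(6) T2] K_compl
      by (simp add: measure_def invariant_measure_def)
    finally show ?thesis using N by simp
  qed
  moreover have "E \<in> sets borel"
    unfolding E_def using preimage_funpow_borel[OF T1 K_compl] .
  ultimately show ?thesis by blast
qed

theorem theorem3p2:
  fixes \<Lambda> :: "'a::polish_space set"
    and T1 T2 :: "'a \<Rightarrow> 'a"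
    and m1 m2 :: "'a measure"
  assumes "\<Lambda> \<in> sets borel"
    and "continuous_on UNIV T1" and "continuous_on UNIV T2"
    and "\<And>K. compact K \<Longrightarrow> K \<inter> \<Lambda> = {} \<Longrightarrow>
           \<exists>I :: nat set. infinite I \<and>
             (\<forall>x. finite {n \<in> I. x \<in> (T1 ^^ n) -` K \<inter> (T2 ^^ n) -` K})"
    and "borel_prob m1" and "invariant_measure T1 m1"
    and "borel_prob m2" and "invariant_measure T2 m2"
    and "emeasure m1 \<Lambda> = 0" and "emeasure m2 \<Lambda> = 0"
  shows "mutually_singular m1 m2"
proof (rule mutually_singularI_approx[OF assms(5,7)])
  fix e :: real assume "e > 0"
  obtain K1 where K1: "compact K1" "K1 \<inter> \<Lambda> = {}" "measure m1 (UNIV - K1) < e/2"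
    using exists_compact_avoiding_null_set[OF assms(5,1,9)] \<open>e > 0\<close> by (meson half_gt_zero)
  obtain K2 where K2: "compact K2" "K2 \<inter> \<Lambda> = {}" "measure m2 (UNIV - K2) < e/2"
    using exists_compact_avoiding_null_set[OF assms(7,1,10)] \<open>e > 0\<close> by (meson half_gt_zero)
  let ?K = "K1 \<union> K2"
  have "measure m1 (UNIV - ?K) \<le> measure m1 (UNIV - K1)"
    "measure m2 (UNIV - ?K) \<le> measure m2 (UNIV - K2)"
    using K1(1) K2(1) by (auto intro!: borel_prob_measure_compl_antimono assms(5,7) compact_imp_closed)
  with K1(3) K2(3) have small: "measure m1 (UNIV - ?K) < e/2" "measure m2 (UNIV - ?K) < e/2"
    by linarith+
  obtain I where I: "infinite I" "\<And>x. finite {n \<in> I. x \<in> (T1 ^^ n) -` ?K \<inter> (T2 ^^ n) -` ?K}"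
    using assms(4)[of ?K] K1 K2 by blast
  have T1: "T1 \<in> borel_measurable borel" and T2: "T2 \<in> borel_measurable borel"
    using assms(2,3) by (simp_all add: borel_measurable_continuous_onI)
  obtain E where E: "E \<in> sets borel" "measure m1 E = measure m1 (UNIV - ?K)"
      "measure m2 (UNIV - E) < measure m2 (UNIV - ?K) + e/2"
    using exists_preimage_separating[OF assms(5,7) T1 T2 assms(6,8) _ I half_gt_zero[OF \<open>e > 0\<close>]]
      borel_compact[OF compact_Un[OF K1(1) K2(1)]] by blast
  moreover from E small \<open>e > 0\<close> have "measure m1 E < e" "measure m2 (UNIV - E) < e"
    by linarith+
  ultimately show "\<exists>E\<in>sets borel. measure m1 E < e \<and> measure m2 (UNIV - E) < e"
    by blast
qed

end
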